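(* Suppose Assumption A1 holds, $F^*>-\infty$, and let $x^k$ be generated by Algorithm (1-RCD) with the indices $i_k$ drawn i.i.d. from the uniform distribution on $\{1,\dots,N\}$. Then: (i) the sequence of random variables $M_1(x^k,L)$ converges to $0$ almost surely, and $F(x^k)$ converges almost surely to some random variable $\bar F$; (ii) every accumulation point of the sequence $x^k$ is a stationary point of problem $\min_x F(x)$, i.e. a point $x^*$ with $0\in\nabla f(x^* )+\partial h(x^* )$.
   Context: Block structure: $n=\sum_{i=1}^N n_i$, $I_n=[U_1\ \dots\ U_N]$ with $U_i\in\mathbb{R}^{n\times n_i}$, $x_i=U_i^Tx$, $\nabla_i f(x)=U_i^T\nabla f(x)$. Problem: $F^*=\min_{x\in\mathbb{R}^n}F(x):=f(x)+h(x)$. Assumption A1: (i) $f$ is differentiable and there are constants $L_i>0$ with $\|\nabla_i f(x+U_is_i)-\nabla_i f(x)\|\le L_i\|s_i\|$ for all $s_i\in\mathbb{R}^{n_i}$, $x\in\mathbb{R}^n$, $i=1,\dots,N$; (ii) $h$ is proper, convex, continuous and block separable, $h(x)=\sum_{i=1}^N h_i(x_i)$ with each $h_i:\mathbb{R}^{n_i}\to\mathbb{R}$ convex. $L=[L_1\dots L_N]^T$. Algorithm (1-RCD): given $x^0\in\mathbb{R}^n$, for $k\ge0$ choose an index $i_k\in\{1,\dots,N\}$ at random (i.i.d. across iterations), compute $d_{i_k}=\arg\min_{s\in\mathbb{R}^{n_{i_k}}}\ f(x^k)+\langle\nabla_{i_k}f(x^k),s\rangle+\frac{L_{i_k}}{2}\|s\|^2+h(x^k+U_{i_k}s)$,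 and set $x^{k+1}=x^k+U_{i_k}d_{i_k}$. Notation: $\|x\|_L=(\sum_i L_i\|x_i\|^2)^{1/2}$, $\|y\|_L^*=(\sum_i L_i^{-1}\|y_i\|^2)^{1/2}$, $D_L=\mathrm{diag}(L_1I_{n_1},\dots,L_NI_{n_N})$, $d_L(x)=\arg\min_{s\in\mathbb{R}^n} f(x)+\langle\nabla f(x),s\rangle+\frac12\|s\|_L^2+h(x+s)$, $M_1(x,L)=\|D_L d_L(x)\|_L^*$. *)

theory Defs
  imports "HOL-Analysis.Analysis" "HOL-Probability.Probability"
begin

text \<open>Coordinates of R^n are indexed by a finite type 'n; blocks by a finite type 'b
  (N = CARD('b)); blk j is the block that coordinate j belongs to.\<close>

definition blockvec :: "('n \<Rightarrow> 'b) \<Rightarrow> 'b \<Rightarrow> (real^'n) set" where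
  "blockvec blk i = {s. \<forall>j. blk j \<noteq> i \<longrightarrow> s $ j = 0}"

text \<open>U_i U_i^T x: the block-i part of x, embedded into R^n.\<close>
definition restr :: "('n \<Rightarrow> 'b) \<Rightarrow> 'b \<Rightarrow> real^'n \<Rightarrow> real^'n" where
  "restr blk i x = (\<chi> j. if blk j = i then x $ j else 0)"

definition normL :: "('b \<Rightarrow> real) \<Rightarrow> ('n \<Rightarrow> 'b) \<Rightarrow> real^'n \<Rightarrow> real" where
  "normL L blk x = sqrt (\<Sum>i\<in>UNIV. L i * (norm (restr blk i x))\<^sup>2)"

definition normL_dual :: "('b \<Rightarrow> real) \<Rightarrow> ('n \<Rightarrow> 'b) \<Rightarrow> real^'n \<Rightarrow> real" where
  "normL_dual L blk y = sqrt (\<Sum>i\<in>UNIV. inverse (L i) * (norm (restr blk i y))\<^sup>2)"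

definition DL :: "('b \<Rightarrow> real) \<Rightarrow> ('n \<Rightarrow> 'b) \<Rightarrow> real^'n \<Rightarrow> real^'n" where
  "DL L blk y = (\<chi> j. L (blk j) * y $ j)"

definition rcd_dir ::
  "(real^'n \<Rightarrow> real) \<Rightarrow> (real^'n \<Rightarrow> real^'n) \<Rightarrow> (real^'n \<Rightarrow> real) \<Rightarrow> ('b \<Rightarrow> real)
   \<Rightarrow> ('n \<Rightarrow> 'b) \<Rightarrow> real^'n \<Rightarrow> 'b \<Rightarrow> real^'n" where
  "rcd_dir f g h L blk x i =
     arg_min (\<lambda>s. f x + restr blk i (g x) \<bullet> s + L i / 2 * (norm s)\<^sup>2 + h (x + s))
             (\<lambda>s. s \<in> blockvec blk i)"

primrec rcd_seq ::
  "(real^'n \<Rightarrow> real) \<Rightarrow> (real^'n \<Rightarrow> real^'n) \<Rightarrow> (real^'n \<Rightarrow> real) \<Rightarrow> ('b \<Rightarrow> real)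
   \<Rightarrow> ('n \<Rightarrow> 'b) \<Rightarrow> real^'n \<Rightarrow> (nat \<Rightarrow> 'b) \<Rightarrow> nat \<Rightarrow> real^'n" where
  "rcd_seq f g h L blk x0 idx 0 = x0"
| "rcd_seq f g h L blk x0 idx (Suc k) =
     rcd_seq f g h L blk x0 idx k
     + rcd_dir f g h L blk (rcd_seq f g h L blk x0 idx k) (idx k)"

definition dL ::
  "(real^'n \<Rightarrow> real) \<Rightarrow> (real^'n \<Rightarrow> real^'n) \<Rightarrow> (real^'n \<Rightarrow> real) \<Rightarrow> ('b \<Rightarrow> real)
   \<Rightarrow> ('n \<Rightarrow> 'b) \<Rightarrow> real^'n \<Rightarrow> real^'n" where
  "dL f g h L blk x =
     arg_min (\<lambda>s. f x + g x \<bullet> s + 1/2 * (normL L blk s)\<^sup>2 + h (x + s)) (\<lambda>s. True)"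

definition M1 ::
  "(real^'n \<Rightarrow> real) \<Rightarrow> (real^'n \<Rightarrow> real^'n) \<Rightarrow> (real^'n \<Rightarrow> real) \<Rightarrow> ('b \<Rightarrow> real)
   \<Rightarrow> ('n \<Rightarrow> 'b) \<Rightarrow> real^'n \<Rightarrow> real" where
  "M1 f g h L blk x = normL_dual L blk (DL L blk (dL f g h L blk x))"

definition subdifferential :: "(real^'n \<Rightarrow> real) \<Rightarrow> real^'n \<Rightarrow> (real^'n) set" where
  "subdifferential h x = {v. \<forall>y. h y \<ge> h x + v \<bullet> (y - x)}"

end

theory Submission
  imports Defs
begin

text \<open>Deterministic part: each step \<open>d\<^sub>i(x)\<close> minimizes a strongly convex proximal objective over
  block \<open>i\<close>, which with the block descent lemma gives \<open>F(x + d\<^sub>i) \<le> F(x) - L\<^sub>i/4 \<parallel>d\<^sub>i\<parallel>\<^sup>2\<close>.  By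
  block separability the full proximal step \<open>d\<^sub>L(x)\<close> consists of the block steps, so
  \<open>M\<^sub>1(x,L)\<^sup>2 = \<Sum>\<^sub>i L\<^sub>i \<parallel>d\<^sub>i(x)\<parallel>\<^sup>2\<close>; at a limit of points with vanishing block steps, \<open>-\<nabla>f \<in> \<partial>h\<close>.

  Probabilistic part: \<open>x\<^sub>k\<close> depends only on the first \<open>k\<close> indices, which are uniform over all
  words of length \<open>k\<close>; hence \<open>E[M\<^sub>1(x\<^sub>k,L)\<^sup>2] = N E[L\<^sub>i\<^sub>k \<parallel>d\<^sub>i\<^sub>k\<parallel>\<^sup>2]\<close>.  Telescoping the decrease
  bounds the sum of the right-hand sides, so \<open>M\<^sub>1(x\<^sub>k,L)\<^sup>2\<close> is almost surely summable; \<open>F(x\<^sub>k)\<close>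
  is monotone and bounded on every path; part (ii) follows from the deterministic limit lemma.\<close>

subsection \<open>Block calculus\<close>

lemma restr_in_blockvec: "restr blk i x \<in> blockvec blk i"
  by (simp add: restr_def blockvec_def)

lemma restr_blockvec: "s \<in> blockvec blk i \<Longrightarrow> restr blk i s = s"
  by (auto simp: restr_def blockvec_def vec_eq_iff)

lemma restr_other: "s \<in> blockvec blk i \<Longrightarrow> j \<noteq> i \<Longrightarrow> restr blk j s = 0"
  by (auto simp: restr_def blockvec_def vec_eq_iff)

lemma restr_add: "restr blk i (x + y) = restr blk i x + restr blk i y"
  by (auto simp: restr_def vec_eq_iff)

lemma restr_sum: "restr blk i (sum F A) = (\<Sum>a\<in>A. restr blk i (F a))"
  by (auto simp: restr_def vec_eq_iff sum_component)

lemma sum_restr: "(\<Sum>i\<in>UNIV. restr blk i x) = (x::real^'n)"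
  for blk :: "'n::finite \<Rightarrow> 'b::finite"
  by (simp add: vec_eq_iff sum_component restr_def)

lemma subspace_blockvec: "subspace (blockvec blk i)"
  by (simp add: subspace_def blockvec_def)

lemma closed_blockvec: "closed (blockvec blk i)"
  by (rule closed_subspace[OF subspace_blockvec])

lemma convex_blockvec: "convex (blockvec blk i)"
  by (rule subspace_imp_convex[OF subspace_blockvec])

lemma inner_restr: "s \<in> blockvec blk i \<Longrightarrow> restr blk i u \<bullet> s = u \<bullet> s"
  by (auto simp: inner_vec_def restr_def blockvec_def intro!: sum.cong)

lemma sum_inner_restr: "(\<Sum>i\<in>UNIV. u \<bullet> restr blk i v) = u \<bullet> (v::real^'n)"
  for blk :: "'n::finite \<Rightarrow> 'b::finite"
  by (simp add: sum_restr flip: inner_sum_right)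

lemma normL_sq:
  assumes "\<And>i. L i > 0"
  shows "(normL L blk s)\<^sup>2 = (\<Sum>i\<in>UNIV. L i * (norm (restr blk i s))\<^sup>2)"
proof -
  have "0 \<le> (\<Sum>i\<in>UNIV. L i * (norm (restr blk i s))\<^sup>2)"
    by (intro sum_nonneg mult_nonneg_nonneg) (auto simp: less_imp_le[OF assms])
  then show ?thesis unfolding normL_def by simp
qed

lemma normL_dual_DL:
  assumes "\<And>i. L i > 0"
  shows "normL_dual L blk (DL L blk y) = sqrt (\<Sum>i\<in>UNIV. L i * (norm (restr blk i y))\<^sup>2)"
proof -
  have "restr blk i (DL L blk y) = L i *\<^sub>R restr blk i y" for i
    by (auto simp: restr_def DL_def vec_eq_iff)
  then have "inverse (L i) * (norm (restr blk i (DL L blk y)))\<^sup>2 = L i * (norm (restr blk i y))\<^sup>2" for i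
    using assms[of i] by (simp add: power2_eq_square field_simps)
  then show ?thesis unfolding normL_dual_def by simp
qed

lemma block_separable_change:
  fixes h :: "real^'n \<Rightarrow> real" and hb :: "'b::finite \<Rightarrow> real^'n \<Rightarrow> real"
  assumes h_sep: "\<And>x. h x = (\<Sum>i\<in>UNIV. hb i (restr blk i x))"
  shows "h (x + s) - h x = (\<Sum>i\<in>UNIV. h (x + restr blk i s) - h x)"
proof -
  have "h (x + restr blk i s) - h x = hb i (restr blk i (x + s)) - hb i (restr blk i x)" for i
  proof -
    have "h (x + restr blk i s) - h x
        = (\<Sum>j\<in>UNIV. hb j (restr blk j (x + restr blk i s)) - hb j (restr blk j x))"
      by (simp add: h_sep sum_subtractf)
    also have "\<dots> = (\<Sum>j\<in>UNIV. if j = i then hb i (restr blk i (x + s)) - hb i (restr blk i x) else 0)"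
      by (intro sum.cong)
         (auto simp: restr_add restr_other[OF restr_in_blockvec] restr_blockvec[OF restr_in_blockvec])
    finally show ?thesis by simp
  qed
  then show ?thesis by (simp add: h_sep sum_subtractf)
qed

subsection \<open>A quadratic bound from a Lipschitz directional derivative\<close>

text \<open>This is the descent lemma behind every coordinate step.\<close>

lemma taylor_error_bound:
  fixes f :: "'a::real_inner \<Rightarrow> real"
  assumes grad: "\<And>y. (f has_derivative (\<lambda>v. g y \<bullet> v)) (at y)"
    and lip: "\<And>t. 0 \<le> t \<Longrightarrow> t \<le> 1 \<Longrightarrow> \<bar>(g (x + t *\<^sub>R s) - g x) \<bullet> s\<bar> \<le> K * t"
  shows "\<bar>f (x + s) - f x - g x \<bullet> s\<bar> \<le> K / 2"
proof -
  have line: "((\<lambda>t. f (x + t *\<^sub>R s)) has_real_derivative (g (x + t *\<^sub>R s) \<bullet> s)) (at t)" for t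
  proof -
    have "((\<lambda>t. x + t *\<^sub>R s) has_derivative (\<lambda>u. u *\<^sub>R s)) (at t)"
      by (auto intro!: derivative_eq_intros)
    from has_derivative_compose[OF this grad]
    show ?thesis by (simp add: has_field_derivative_def mult_commute_abs)
  qed
  have signed: "\<sigma> * (f (x + s) - f x - g x \<bullet> s) \<le> K / 2" if \<sigma>: "\<bar>\<sigma>\<bar> = 1" for \<sigma> :: real
  proof -
    define \<psi> where "\<psi> t = \<sigma> * (f (x + t *\<^sub>R s) - f x - t * (g x \<bullet> s)) - K / 2 * t\<^sup>2" for t
    define \<psi>' where "\<psi>' t = \<sigma> * ((g (x + t *\<^sub>R s) - g x) \<bullet> s) - K * t" for t
    have "(\<psi> has_real_derivative \<psi>' t) (at t)" for t
      unfolding \<psi>_def \<psi>'_def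
      by (rule derivative_eq_intros line refl)+ (simp add: algebra_simps inner_diff_left)
    then obtain z where z: "0 < z" "z < 1" "\<psi> 1 - \<psi> 0 = (1 - 0) * \<psi>' z"
      using MVT2[of 0 1 \<psi> \<psi>'] by auto
    have "\<sigma> * ((g (x + z *\<^sub>R s) - g x) \<bullet> s) \<le> \<bar>(g (x + z *\<^sub>R s) - g x) \<bullet> s\<bar>"
      using abs_ge_self[of "\<sigma> * ((g (x + z *\<^sub>R s) - g x) \<bullet> s)"] \<sigma> by (simp add: abs_mult)
    with lip[of z] z have "\<psi>' z \<le> 0" unfolding \<psi>'_def by linarith
    with z have "\<psi> 1 \<le> \<psi> 0" by simp
    then show ?thesis unfolding \<psi>_def by simp
  qed
  show ?thesis using signed[of 1] signed[of "-1"] unfolding abs_le_iff by auto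
qed

subsection \<open>Minimizing a strongly convex proximal objective\<close>

definition prox_obj :: "'a::real_inner \<Rightarrow> real \<Rightarrow> ('a \<Rightarrow> real) \<Rightarrow> 'a \<Rightarrow> real" where
  "prox_obj a c \<phi> s = a \<bullet> s + c / 2 * (norm s)\<^sup>2 + \<phi> s"

lemma prox_obj_midpoint:
  assumes "convex_on S \<phi>" "d \<in> S" "e \<in> S"
  shows "prox_obj a c \<phi> ((1/2) *\<^sub>R d + (1/2) *\<^sub>R e)
           \<le> prox_obj a c \<phi> d / 2 + prox_obj a c \<phi> e / 2 - c / 8 * (norm (d - e))\<^sup>2"
proof -
  define m where "m = (1/2) *\<^sub>R d + (1/2) *\<^sub>R e"
  have "\<phi> ((1 - 1/2) *\<^sub>R d + (1/2) *\<^sub>R e) \<le> (1 - 1/2) * \<phi> d + (1/2) * \<phi> e"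
    by (rule convex_onD[OF assms(1)]) (use assms in auto)
  then have "\<phi> m \<le> \<phi> d / 2 + \<phi> e / 2" by (simp add: m_def)
  moreover have norm_m: "(norm m)\<^sup>2 = (norm d)\<^sup>2 / 2 + (norm e)\<^sup>2 / 2 - (norm (d - e))\<^sup>2 / 4"
    unfolding m_def power2_norm_eq_inner
    by (simp add: inner_add_left inner_add_right inner_diff_left inner_diff_right inner_commute)
       (simp add: field_simps)
  then have "c / 2 * (norm m)\<^sup>2 = c / 2 * (norm d)\<^sup>2 / 2 + c / 2 * (norm e)\<^sup>2 / 2 - c / 8 * (norm (d - e))\<^sup>2"
    unfolding norm_m by (simp add: algebra_simps)
  moreover have "a \<bullet> m = a \<bullet> d / 2 + a \<bullet> e / 2" by (simp add: m_def inner_add_right)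
  ultimately show ?thesis unfolding m_def[symmetric] prox_obj_def by (simp add: field_simps)
qed

lemma prox_obj_min_unique:
  assumes "convex_on S \<phi>" "c > 0"
    and d: "d \<in> S" "\<And>s. s \<in> S \<Longrightarrow> prox_obj a c \<phi> d \<le> prox_obj a c \<phi> s"
    and e: "e \<in> S" "\<And>s. s \<in> S \<Longrightarrow> prox_obj a c \<phi> e \<le> prox_obj a c \<phi> s"
  shows "d = e"
proof -
  have "(1/2) *\<^sub>R d + (1/2) *\<^sub>R e \<in> S"
    using convexD[OF convex_on_imp_convex[OF assms(1)] d(1) e(1), of "1/2" "1/2"] by simp
  with d e prox_obj_midpoint[OF assms(1) d(1) e(1), of a c]
  have "c / 8 * (norm (d - e))\<^sup>2 \<le> 0" by force
  with \<open>c > 0\<close> show ?thesis by (simp add: mult_le_0_iff)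
qed

lemma prox_obj_min_decrease:
  assumes "convex_on S \<phi>" "0 \<in> S"
    and d: "d \<in> S" "\<And>s. s \<in> S \<Longrightarrow> prox_obj a c \<phi> d \<le> prox_obj a c \<phi> s"
  shows "prox_obj a c \<phi> d \<le> \<phi> 0 - c / 4 * (norm d)\<^sup>2"
proof -
  have "(1/2) *\<^sub>R d + (1/2) *\<^sub>R 0 \<in> S"
    using convexD[OF convex_on_imp_convex[OF assms(1)] d(1) assms(2), of "1/2" "1/2"] by simp
  with d prox_obj_midpoint[OF assms(1) d(1) assms(2), of a c]
  have "prox_obj a c \<phi> d \<le> prox_obj a c \<phi> d / 2 + prox_obj a c \<phi> 0 / 2 - c / 8 * (norm d)\<^sup>2"
    by force
  moreover have "prox_obj a c \<phi> 0 = \<phi> 0" by (simp add: prox_obj_def)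
  ultimately show ?thesis by linarith
qed

text \<open>If the null step minimizes the proximal objective over a convex set containing \<open>0\<close>,
  then \<open>-a\<close> is a subgradient of \<open>\<phi>\<close> at \<open>0\<close> relative to that set: the quadratic term is
  of second order and disappears when the step is shrunk towards \<open>0\<close>.\<close>

lemma prox_obj_min_at_zero:
  assumes "convex_on S \<phi>" "0 \<in> S" "c > 0"
    and zero_min: "\<And>s. s \<in> S \<Longrightarrow> prox_obj a c \<phi> 0 \<le> prox_obj a c \<phi> s"
    and s: "s \<in> S"
  shows "\<phi> s - \<phi> 0 \<ge> - (a \<bullet> s)"
proof (rule ccontr)
  define \<delta> where "\<delta> = a \<bullet> s + \<phi> s - \<phi> 0"
  assume "\<not> ?thesis"
  then have \<delta>: "\<delta> < 0" by (simp add: \<delta>_def)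
  then have "s \<noteq> 0" by (auto simp: \<delta>_def)
  define n where "n = c * (norm s)\<^sup>2"
  have n: "n > 0" using \<open>s \<noteq> 0\<close> \<open>c > 0\<close> by (simp add: n_def)
  define t where "t = min 1 (- \<delta> / n)"
  have t: "0 < t" "t \<le> 1" "n * t \<le> - \<delta>"
    using \<delta> n by (auto simp: t_def min_def field_simps)
  have "t *\<^sub>R s \<in> S"
    using convexD[OF convex_on_imp_convex[OF assms(1)] assms(2) s, of "1 - t" t] t by simp
  then have "\<phi> 0 \<le> t * (a \<bullet> s) + t * (n * t) / 2 + \<phi> (t *\<^sub>R s)"
    using zero_min[of "t *\<^sub>R s"] t
    by (simp add: prox_obj_def n_def power2_eq_square mult_ac)
  moreover have "\<phi> (t *\<^sub>R s) \<le> (1 - t) * \<phi> 0 + t * \<phi> s"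
    using convex_onD[OF assms(1), of t 0 s] t assms(2) s by simp
  ultimately have "0 \<le> t * (\<delta> + n * t / 2)"
    by (simp add: \<delta>_def algebra_simps)
  then have "0 \<le> \<delta> + n * t / 2" using t by (simp add: zero_le_mult_iff)
  with t \<delta> show False by linarith
qed

lemma convex_linear_lower_growth:
  fixes \<phi> :: "'a::euclidean_space \<Rightarrow> real"
  assumes conv: "convex_on UNIV \<phi>" and cont: "continuous_on UNIV \<phi>"
  obtains C where "C \<ge> 0" "\<And>s. \<phi> s - \<phi> 0 \<ge> - C - C * norm s"
proof -
  have "continuous_on (cball 0 1) (\<lambda>u. \<bar>\<phi> u - \<phi> 0\<bar>)"
    by (intro continuous_intros continuous_on_subset[OF cont]) auto
  then obtain u0 where u0: "u0 \<in> cball 0 1" "\<forall>u\<in>cball 0 1. \<bar>\<phi> u - \<phi> 0\<bar> \<le> \<bar>\<phi> u0 - \<phi> 0\<bar>"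
    using continuous_attains_sup[of "cball 0 1" "\<lambda>u. \<bar>\<phi> u - \<phi> 0\<bar>"] by auto
  define C where "C = \<bar>\<phi> u0 - \<phi> 0\<bar>"
  have C: "\<bar>\<phi> u - \<phi> 0\<bar> \<le> C" if "norm u \<le> 1" for u
    using u0 that by (auto simp: C_def)
  have "\<phi> s - \<phi> 0 \<ge> - C - C * norm s" for s
  proof (cases "norm s \<le> 1")
    case True
    then have "- C \<le> \<phi> s - \<phi> 0" using C[of s] by (simp add: abs_le_iff)
    moreover have "0 \<le> C * norm s" by (simp add: C_def)
    ultimately show ?thesis by linarith
  next
    case False
    define l where "l = 1 / norm s"
    have l: "0 \<le> l" "l \<le> 1" "l * norm s = 1" using False by (auto simp: l_def divide_simps)
    have "\<phi> ((1 - l) *\<^sub>R 0 + l *\<^sub>R s) \<le> (1 - l) * \<phi> 0 + l * \<phi> s"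
      by (rule convex_onD[OF conv]) (use l in auto)
    then have "\<phi> (l *\<^sub>R s) - \<phi> 0 \<le> l * (\<phi> s - \<phi> 0)" by (simp add: algebra_simps)
    moreover have "- C \<le> \<phi> (l *\<^sub>R s) - \<phi> 0" using C[of "l *\<^sub>R s"] l by (simp add: abs_le_iff)
    ultimately have "- C * norm s \<le> l * (\<phi> s - \<phi> 0) * norm s"
      using False by (intro mult_right_mono) auto
    also have "\<dots> = (l * norm s) * (\<phi> s - \<phi> 0)" by (simp add: mult_ac)
    finally have "- C * norm s \<le> \<phi> s - \<phi> 0" using l(3) by simp
    then show ?thesis using C[of 0] by simp
  qed
  moreover have "C \<ge> 0" by (simp add: C_def)
  ultimately show thesis using that by blast
qed

text \<open>The proximal objective of a continuous convex function attains its minimum on every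
  closed set containing \<open>0\<close>: it is continuous and coercive.\<close>

lemma prox_obj_has_min:
  fixes \<phi> :: "'a::euclidean_space \<Rightarrow> real"
  assumes conv: "convex_on UNIV \<phi>" and cont: "continuous_on UNIV \<phi>"
    and "closed S" "0 \<in> S" "c > 0"
  shows "\<exists>d\<in>S. \<forall>s\<in>S. prox_obj a c \<phi> d \<le> prox_obj a c \<phi> s"
proof -
  obtain C where C: "C \<ge> 0" "\<And>s. \<phi> s - \<phi> 0 \<ge> - C - C * norm s"
    using convex_linear_lower_growth[OF conv cont] by blast
  define R where "R = 2 * (norm a + 2 * C) / c + 1"
  have R: "R \<ge> 1" "c / 2 * R = norm a + 2 * C + c / 2"
    using \<open>c > 0\<close> C(1) by (simp_all add: R_def field_simps)
  have far: "prox_obj a c \<phi> s > prox_obj a c \<phi> 0" if s: "norm s > R" for s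
  proof -
    define r where "r = norm s"
    have r: "r > R" "r \<ge> 1" using s R by (auto simp: r_def)
    have "a \<bullet> s \<ge> - (norm a * r)"
      using Cauchy_Schwarz_ineq2[of a s] by (simp add: r_def abs_le_iff)
    moreover have "\<phi> s - \<phi> 0 \<ge> - C - C * r" using C(2)[of s] by (simp add: r_def)
    moreover have "c / 2 * r * r \<ge> (norm a + 2 * C + c / 2) * r"
      using r R \<open>c > 0\<close> by (intro mult_right_mono) (auto simp flip: R(2))
    moreover have "C + c / 2 \<le> (C + c / 2) * r"
      using r(2) C(1) \<open>c > 0\<close> by (simp add: mult_le_cancel_left1)
    ultimately have "a \<bullet> s + c / 2 * r * r + (\<phi> s - \<phi> 0) > 0"
      using \<open>c > 0\<close> by (simp add: algebra_simps)
    then show ?thesis by (simp add: prox_obj_def r_def power2_eq_square mult.assoc)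
  qed
  define K where "K = cball 0 R \<inter> S"
  have "compact K" unfolding K_def by (intro compact_Int_closed compact_cball \<open>closed S\<close>)
  moreover have "0 \<in> K" using R \<open>0 \<in> S\<close> by (simp add: K_def)
  moreover have "continuous_on K (prox_obj a c \<phi>)"
    unfolding prox_obj_def by (intro continuous_intros continuous_on_subset[OF cont]) auto
  ultimately obtain d where d: "d \<in> K" "\<forall>s\<in>K. prox_obj a c \<phi> d \<le> prox_obj a c \<phi> s"
    using continuous_attains_inf[of K "prox_obj a c \<phi>"] by blast
  have "prox_obj a c \<phi> d \<le> prox_obj a c \<phi> s" if "s \<in> S" for s
  proof (cases "norm s \<le> R")
    case True
    then show ?thesis using d that by (auto simp: K_def)
  next
    case False
    then show ?thesis using far[of s] d(2) \<open>0 \<in> K\<close> by force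
  qed
  then show ?thesis using d by (auto simp: K_def)
qed

lemma arg_min_minimizes:
  fixes q :: "'a \<Rightarrow> 'b::linorder"
  assumes "P d" "\<And>s. P s \<Longrightarrow> q d \<le> q s"
  shows "P (arg_min q P)" "\<And>s. P s \<Longrightarrow> q (arg_min q P) \<le> q s"
  using arg_minI[of P d q "\<lambda>m. P m \<and> (\<forall>s. P s \<longrightarrow> q m \<le> q s)"] assms
  by (auto simp: not_less)

subsection \<open>The deterministic method\<close>

text \<open>Standing assumptions A1 of the paper.\<close>

locale rcd =
  fixes f h :: "real^'n \<Rightarrow> real" and g :: "real^'n \<Rightarrow> real^'n"
    and hb :: "'b::finite \<Rightarrow> real^'n \<Rightarrow> real" and L :: "'b \<Rightarrow> real" and blk :: "'n \<Rightarrow> 'b"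
  assumes grad: "\<And>x. (f has_derivative (\<lambda>v. g x \<bullet> v)) (at x)"
    and L_pos: "\<And>i. L i > 0"
    and lipschitz: "\<And>i x s. s \<in> blockvec blk i \<Longrightarrow>
          norm (restr blk i (g (x + s)) - restr blk i (g x)) \<le> L i * norm s"
    and h_sep: "\<And>x. h x = (\<Sum>i\<in>UNIV. hb i (restr blk i x))"
    and h_convex: "convex_on UNIV h"
    and h_cont: "continuous_on UNIV h"
begin

lemma block_taylor_error:
  assumes s: "s \<in> blockvec blk i"
  shows "\<bar>f (x + s) - f x - g x \<bullet> s\<bar> \<le> L i / 2 * (norm s)\<^sup>2"
proof -
  have "\<bar>(g (x + t *\<^sub>R s) - g x) \<bullet> s\<bar> \<le> L i * (norm s)\<^sup>2 * t" if t: "0 \<le> t" for t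
  proof -
    have ts: "t *\<^sub>R s \<in> blockvec blk i" using s by (simp add: subspace_scale[OF subspace_blockvec])
    have "\<bar>(g (x + t *\<^sub>R s) - g x) \<bullet> s\<bar> = \<bar>(restr blk i (g (x + t *\<^sub>R s)) - restr blk i (g x)) \<bullet> s\<bar>"
      by (simp add: inner_diff_left inner_restr[OF s])
    also have "\<dots> \<le> norm (restr blk i (g (x + t *\<^sub>R s)) - restr blk i (g x)) * norm s"
      by (rule Cauchy_Schwarz_ineq2)
    also have "\<dots> \<le> L i * norm (t *\<^sub>R s) * norm s"
      by (intro mult_right_mono lipschitz ts) auto
    finally show ?thesis using t by (simp add: power2_eq_square mult_ac)
  qed
  then show ?thesis
    using taylor_error_bound[OF grad, of x s "L i * (norm s)\<^sup>2"] by (simp add: mult_ac)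
qed

lemma f_continuous: "isCont f x"
  using grad by (rule has_derivative_continuous)

text \<open>The gradient is continuous: each coordinate of \<open>g\<close> is a uniform limit of continuous
  difference quotients of \<open>f\<close>, by the block descent lemma.\<close>

lemma g_continuous: "isCont g x"
proof -
  have "isCont (\<lambda>y. g y $ j) x" for j
    unfolding continuous_at_eps_delta
  proof (intro allI impI)
    fix e :: real assume e: "e > 0"
    define t where "t = e / (2 * L (blk j))"
    have t: "t > 0" "L (blk j) / 2 * t = e / 4"
      using e L_pos[of "blk j"] by (simp_all add: t_def)
    define v where "v = t *\<^sub>R axis j (1::real)"
    have v_block: "v \<in> blockvec blk (blk j)" by (auto simp: blockvec_def axis_def v_def)
    have v_norm: "norm v = t" and v_inner: "g y \<bullet> v = t * g y $ j" for y
      using t by (simp_all add: v_def inner_axis)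
    define q where "q y = (f (y + v) - f y) / t" for y
    have approx: "\<bar>g y $ j - q y\<bar> \<le> e / 4" for y
    proof -
      have "\<bar>f (y + v) - f y - t * g y $ j\<bar> \<le> (L (blk j) / 2 * t) * t"
        using block_taylor_error[OF v_block, of y] by (simp add: v_norm v_inner power2_eq_square mult_ac)
      then have "\<bar>(f (y + v) - f y - t * g y $ j) / t\<bar> \<le> L (blk j) / 2 * t"
        using t by (simp add: abs_divide pos_divide_le_eq)
      moreover have "(f (y + v) - f y - t * g y $ j) / t = q y - g y $ j"
        using t by (simp add: q_def field_simps)
      ultimately have "\<bar>q y - g y $ j\<bar> \<le> L (blk j) / 2 * t" by simp
      then show ?thesis by (simp only: t(2) abs_minus_commute)
    qed
    have "isCont q x"
      unfolding q_def using t by (intro continuous_intros isCont_o2[OF _ f_continuous]) auto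
    then obtain d where d: "d > 0" "\<And>y. dist y x < d \<Longrightarrow> dist (q y) (q x) < e / 2"
      unfolding continuous_at_eps_delta using e by (meson half_gt_zero)
    show "\<exists>d>0. \<forall>y. dist y x < d \<longrightarrow> dist (g y $ j) (g x $ j) < e"
    proof (intro exI conjI allI impI)
      fix y assume "dist y x < d"
      with d have "\<bar>q y - q x\<bar> < e / 2" by (simp add: dist_real_def)
      with approx[of y] approx[of x] show "dist (g y $ j) (g x $ j) < e"
        unfolding dist_real_def abs_le_iff abs_less_iff by linarith
    qed (rule d)
  qed
  then have "((\<lambda>y. \<chi> j. g y $ j) \<longlongrightarrow> (\<chi> j. g x $ j)) (at x)"
    by (intro tendsto_vec_lambda) (simp add: isCont_def)
  then show ?thesis by (simp add: isCont_def vec_lambda_eta)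
qed

lemma h_continuous: "isCont h x"
  using h_cont by (simp add: continuous_on_eq_continuous_at)

text \<open>The block-\<open>i\<close> subproblem of (1-RCD) is the proximal objective of \<open>s \<mapsto> h (x + s)\<close>
  with linear part \<open>\<nabla>\<^sub>i f(x)\<close> and curvature \<open>L i\<close>, up to the constant \<open>f x\<close>.\<close>

definition block_obj :: "real^'n \<Rightarrow> 'b \<Rightarrow> real^'n \<Rightarrow> real" where
  "block_obj x i = prox_obj (restr blk i (g x)) (L i) (\<lambda>s. h (x + s))"

lemma convex_on_shift: "convex_on UNIV (\<lambda>s. h (x + s))"
proof (rule convex_onI)
  fix u v :: "real^'n" and t :: real
  assume "0 < t" "t < 1"
  moreover have "x + ((1 - t) *\<^sub>R u + t *\<^sub>R v) = (1 - t) *\<^sub>R (x + u) + t *\<^sub>R (x + v)"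
    by (simp add: algebra_simps)
  ultimately show "h (x + ((1 - t) *\<^sub>R u + t *\<^sub>R v)) \<le> (1 - t) * h (x + u) + t * h (x + v)"
    using convex_onD[OF h_convex, of t "x + u" "x + v"] by simp
qed simp

lemma continuous_shift: "continuous_on UNIV (\<lambda>s. h (x + s))"
  by (intro continuous_on_compose2[OF h_cont] continuous_intros) auto

lemma rcd_dir_minimizes:
  shows "rcd_dir f g h L blk x i \<in> blockvec blk i"
    and "\<And>s. s \<in> blockvec blk i \<Longrightarrow> block_obj x i (rcd_dir f g h L blk x i) \<le> block_obj x i s"
proof -
  obtain d where d: "d \<in> blockvec blk i" "\<And>s. s \<in> blockvec blk i \<Longrightarrow> block_obj x i d \<le> block_obj x i s"
    using prox_obj_has_min[OF convex_on_shift continuous_shift closed_blockvec[of blk i]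
        subspace_0[OF subspace_blockvec] L_pos[of i]]
    unfolding block_obj_def by blast
  define P where "P = (\<lambda>s. s \<in> blockvec blk i)"
  define q where "q = (\<lambda>s. f x + block_obj x i s)"
  have dir: "rcd_dir f g h L blk x i = arg_min q P"
    by (simp add: rcd_dir_def q_def P_def block_obj_def prox_obj_def add.assoc)
  have "P d" "\<And>s. P s \<Longrightarrow> q d \<le> q s" using d by (simp_all add: P_def q_def)
  from arg_min_minimizes[of P d q, OF this] show "rcd_dir f g h L blk x i \<in> blockvec blk i"
    and "\<And>s. s \<in> blockvec blk i \<Longrightarrow> block_obj x i (rcd_dir f g h L blk x i) \<le> block_obj x i s"
    by (simp_all add: dir P_def q_def)
qed

lemma block_obj_eq:
  assumes "s \<in> blockvec blk i"
  shows "block_obj x i s = g x \<bullet> s + L i / 2 * (norm s)\<^sup>2 + h (x + s)"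
  by (simp add: block_obj_def prox_obj_def inner_restr[OF assms])

lemma convex_on_shift_block: "convex_on (blockvec blk i) (\<lambda>s. h (x + s))"
  by (rule convex_on_subset[OF convex_on_shift _ convex_blockvec]) simp

lemma sufficient_decrease:
  fixes x :: "real^'n" and i :: 'b
  defines "d \<equiv> rcd_dir f g h L blk x i"
  shows "f (x + d) + h (x + d) \<le> f x + h x - L i / 4 * (norm d)\<^sup>2"
proof -
  have d: "d \<in> blockvec blk i" "\<And>s. s \<in> blockvec blk i \<Longrightarrow> block_obj x i d \<le> block_obj x i s"
    unfolding d_def by (rule rcd_dir_minimizes)+
  have "f (x + d) \<le> f x + g x \<bullet> d + L i / 2 * (norm d)\<^sup>2"
    using order_trans[OF abs_ge_self block_taylor_error[OF d(1), of x]] by simp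
  moreover have "block_obj x i d \<le> h x - L i / 4 * (norm d)\<^sup>2"
    using prox_obj_min_decrease[OF convex_on_shift_block subspace_0[OF subspace_blockvec]
        d[unfolded block_obj_def]]
    by (simp add: block_obj_def)
  ultimately show ?thesis by (simp add: block_obj_eq[OF d(1)])
qed

lemma full_obj_blocks:
  "f x + g x \<bullet> s + 1/2 * (normL L blk s)\<^sup>2 + h (x + s)
     = f x + h x + (\<Sum>i\<in>UNIV. block_obj x i (restr blk i s) - h x)"
proof -
  have "g x \<bullet> s = (\<Sum>i\<in>UNIV. g x \<bullet> restr blk i s)"
    by (simp add: sum_inner_restr)
  moreover have "1/2 * (normL L blk s)\<^sup>2 = (\<Sum>i\<in>UNIV. L i / 2 * (norm (restr blk i s))\<^sup>2)"
    by (simp add: normL_sq[OF L_pos] sum_distrib_left)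
  moreover note block_separable_change[where hb=hb, OF h_sep, of x s]
  moreover have "(\<Sum>i\<in>UNIV. block_obj x i (restr blk i s) - h x)
      = (\<Sum>i\<in>UNIV. g x \<bullet> restr blk i s) + (\<Sum>i\<in>UNIV. L i / 2 * (norm (restr blk i s))\<^sup>2)
        + (\<Sum>i\<in>UNIV. h (x + restr blk i s) - h x)"
    by (simp add: block_obj_eq[OF restr_in_blockvec] flip: sum.distrib) (simp add: algebra_simps)
  ultimately show ?thesis by (simp add: add.commute)
qed

lemma restr_dL: "restr blk i (dL f g h L blk x) = rcd_dir f g h L blk x i"
proof -
  define d where "d j = rcd_dir f g h L blk x j" for j
  define b where "b j s = block_obj x j s - h x" for j s
  define Q where "Q s = f x + g x \<bullet> s + 1/2 * (normL L blk s)\<^sup>2 + h (x + s)" for s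
  have d: "d j \<in> blockvec blk j" "\<And>s. s \<in> blockvec blk j \<Longrightarrow> b j (d j) \<le> b j s" for j
    unfolding d_def b_def using rcd_dir_minimizes by auto
  have Q: "Q s = f x + h x + (\<Sum>j\<in>UNIV. b j (restr blk j s))" for s
    unfolding Q_def b_def by (rule full_obj_blocks)
  define D where "D = (\<Sum>j\<in>UNIV. d j)"
  have restr_D: "restr blk j D = d j" for j
    unfolding D_def restr_sum
    by (subst sum.remove[of _ j]) (auto simp: restr_blockvec[OF d(1)] restr_other[OF d(1)])
  have D_min: "Q D \<le> Q s" for s
    unfolding Q restr_D by (simp add: sum_mono d restr_in_blockvec)
  define S where "S = dL f g h L blk x"
  have "Q S \<le> Q D"
    using arg_min_minimizes[of "\<lambda>_. True" D Q] D_min by (simp add: S_def dL_def Q_def[abs_def])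
  with D_min[of S] have "(\<Sum>j\<in>UNIV. b j (restr blk j S)) = (\<Sum>j\<in>UNIV. b j (d j))"
    unfolding Q restr_D by simp
  then have b_eq: "b i (d i) = b i (restr blk i S)"
    by (rule sum_mono_inv[OF sym]) (simp_all add: d(2) restr_in_blockvec)
  have "restr blk i S = d i"
  proof (rule prox_obj_min_unique[OF convex_on_shift_block L_pos restr_in_blockvec _ d(1)])
    show "prox_obj (restr blk i (g x)) (L i) (\<lambda>s. h (x + s)) (restr blk i S)
        \<le> prox_obj (restr blk i (g x)) (L i) (\<lambda>s. h (x + s)) s" if "s \<in> blockvec blk i" for s
      using d(2)[OF that] b_eq by (simp add: b_def block_obj_def)
    show "prox_obj (restr blk i (g x)) (L i) (\<lambda>s. h (x + s)) (d i)
        \<le> prox_obj (restr blk i (g x)) (L i) (\<lambda>s. h (x + s)) s" if "s \<in> blockvec blk i" for s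
      using d(2)[OF that] by (simp add: b_def block_obj_def)
  qed
  then show ?thesis by (simp add: S_def d_def)
qed

definition block_steps_sq :: "real^'n \<Rightarrow> real" where
  "block_steps_sq x = (\<Sum>i\<in>UNIV. L i * (norm (rcd_dir f g h L blk x i))\<^sup>2)"

lemma block_step_le: "L i * (norm (rcd_dir f g h L blk x i))\<^sup>2 \<le> block_steps_sq x"
  unfolding block_steps_sq_def
  by (rule member_le_sum) (auto intro: mult_nonneg_nonneg less_imp_le[OF L_pos])

lemma block_steps_sq_nonneg: "block_steps_sq x \<ge> 0"
  unfolding block_steps_sq_def
  by (intro sum_nonneg mult_nonneg_nonneg) (auto intro: less_imp_le[OF L_pos])

lemma M1_blocks: "M1 f g h L blk x = sqrt (block_steps_sq x)"
  by (simp add: M1_def normL_dual_DL[OF L_pos] restr_dL block_steps_sq_def)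

text \<open>If points \<open>x\<^sub>k \<rightarrow> x\<^sup>*\<close> have vanishing block steps, then at \<open>x\<^sup>*\<close> the null step minimizes every
  block objective: pass to the limit in the minimality of \<open>d\<^sub>i(x\<^sub>k)\<close>, using continuity of \<open>g\<close>
  and \<open>h\<close>.\<close>

lemma null_step_optimal_in_limit:
  assumes xk: "xk \<longlonglongrightarrow> xs"
    and dk: "(\<lambda>k. rcd_dir f g h L blk (xk k) i) \<longlonglongrightarrow> 0"
    and s: "s \<in> blockvec blk i"
  shows "block_obj xs i 0 \<le> block_obj xs i s"
proof -
  define d where "d k = rcd_dir f g h L blk (xk k) i" for k
  have "block_obj (xk k) i (d k) \<le> block_obj (xk k) i s" for k
    unfolding d_def using s by (rule rcd_dir_minimizes)
  then have le: "g (xk k) \<bullet> d k + L i / 2 * (norm (d k))\<^sup>2 + h (xk k + d k)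
      \<le> g (xk k) \<bullet> s + L i / 2 * (norm s)\<^sup>2 + h (xk k + s)" for k
    by (simp add: block_obj_eq[OF s] block_obj_eq[OF rcd_dir_minimizes(1)] d_def)
  have "(\<lambda>k. g (xk k) \<bullet> d k + L i / 2 * (norm (d k))\<^sup>2 + h (xk k + d k))
      \<longlonglongrightarrow> g xs \<bullet> 0 + L i / 2 * (norm (0::real^'n))\<^sup>2 + h (xs + 0)"
    using dk unfolding d_def[symmetric]
    by (intro tendsto_intros isCont_tendsto_compose[OF g_continuous]
          isCont_tendsto_compose[OF h_continuous] xk)
  moreover have "(\<lambda>k. g (xk k) \<bullet> s + L i / 2 * (norm s)\<^sup>2 + h (xk k + s))
      \<longlonglongrightarrow> g xs \<bullet> s + L i / 2 * (norm s)\<^sup>2 + h (xs + s)"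
    by (intro tendsto_intros isCont_tendsto_compose[OF g_continuous]
          isCont_tendsto_compose[OF h_continuous] xk)
  ultimately have "h xs \<le> g xs \<bullet> s + L i / 2 * (norm s)\<^sup>2 + h (xs + s)"
    using LIMSEQ_le le by fastforce
  then show ?thesis by (simp add: block_obj_eq[OF s] block_obj_eq[OF subspace_0[OF subspace_blockvec]])
qed

text \<open>Hence such a limit is stationary: block optimality of the null step gives a subgradient
  inequality for each block, and block separability adds them up.\<close>

lemma stationary_limit:
  assumes xk: "xk \<longlonglongrightarrow> xs"
    and dk: "\<And>i. (\<lambda>k. rcd_dir f g h L blk (xk k) i) \<longlonglongrightarrow> 0"
  shows "- g xs \<in> subdifferential h xs"
proof -
  have block_subgrad: "h (xs + s) - h xs \<ge> - (g xs \<bullet> s)" if s: "s \<in> blockvec blk i" for i s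
  proof -
    have "prox_obj (restr blk i (g xs)) (L i) (\<lambda>s. h (xs + s)) 0
        \<le> prox_obj (restr blk i (g xs)) (L i) (\<lambda>s. h (xs + s)) t" if "t \<in> blockvec blk i" for t
      using null_step_optimal_in_limit[OF xk dk that] by (simp add: block_obj_def)
    from prox_obj_min_at_zero[OF convex_on_shift_block subspace_0[OF subspace_blockvec] L_pos this s]
    show ?thesis by (simp add: inner_restr[OF s])
  qed
  show ?thesis unfolding subdifferential_def
  proof (intro CollectI allI)
    fix y
    have "h y - h xs = (\<Sum>i\<in>UNIV. h (xs + restr blk i (y - xs)) - h xs)"
      using block_separable_change[where hb=hb, OF h_sep, of xs "y - xs"] by simp
    also have "\<dots> \<ge> (\<Sum>i\<in>UNIV. - (g xs \<bullet> restr blk i (y - xs)))"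
      by (intro sum_mono block_subgrad[OF restr_in_blockvec])
    finally show "h y \<ge> h xs + - g xs \<bullet> (y - xs)"
      by (simp add: sum_negf sum_inner_restr)
  qed
qed


lemma block_steps_to_zero:
  assumes "(\<lambda>k. block_steps_sq (xk k)) \<longlonglongrightarrow> 0"
  shows "(\<lambda>k. rcd_dir f g h L blk (xk k) i) \<longlonglongrightarrow> 0"
proof -
  have lim: "(\<lambda>k. block_steps_sq (xk k) / L i) \<longlonglongrightarrow> 0"
    using tendsto_divide_zero[OF assms] by simp
  have "(norm (rcd_dir f g h L blk (xk k) i))\<^sup>2 \<le> block_steps_sq (xk k) / L i" for k
    using block_step_le[of i "xk k"] L_pos[of i] by (simp add: pos_le_divide_eq mult.commute)
  then have "(\<lambda>k. (norm (rcd_dir f g h L blk (xk k) i))\<^sup>2) \<longlonglongrightarrow> 0"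
    by (intro tendsto_sandwich[OF _ _ tendsto_const lim]) simp_all
  then have "(\<lambda>k. sqrt ((norm (rcd_dir f g h L blk (xk k) i))\<^sup>2)) \<longlonglongrightarrow> sqrt 0"
    by (rule tendsto_real_sqrt)
  then show ?thesis by (simp add: tendsto_norm_zero_iff)
qed

end

subsection \<open>The randomized method\<close>

locale rcd_prob = rcd f h g hb L blk + prob_space M
  for f h :: "real^'n \<Rightarrow> real" and g and hb :: "'b::finite \<Rightarrow> real^'n \<Rightarrow> real" and L blk
    and M :: "'a measure" +
  fixes I :: "nat \<Rightarrow> 'a \<Rightarrow> 'b" and x0 :: "real^'n"
  assumes indep: "indep_vars (\<lambda>_. count_space UNIV) I UNIV"
    and uniform: "\<And>k. distr M (count_space UNIV) (I k) = measure_pmf (pmf_of_set UNIV)"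
    and F_bdd: "bdd_below (range (\<lambda>x. f x + h x))"
begin

definition iterate :: "'a \<Rightarrow> nat \<Rightarrow> real^'n" where
  "iterate \<omega> k = rcd_seq f g h L blk x0 (\<lambda>k. I k \<omega>) k"

text \<open>The indices drawn before step \<open>m\<close>, most recent first.\<close>

definition history :: "nat \<Rightarrow> 'a \<Rightarrow> 'b list" where
  "history m \<omega> = map (\<lambda>j. I j \<omega>) (rev [0..<m])"

lemma history_Suc: "history (Suc m) \<omega> = I m \<omega> # history m \<omega>"
  by (simp add: history_def)

lemma length_history [simp]: "length (history m \<omega>) = m"
  by (simp add: history_def)

lemma history_nth: "j < m \<Longrightarrow> rev (history m \<omega>) ! j = I j \<omega>"
  by (simp add: history_def rev_map)

lemma history_eq_iff:
  assumes "length ws = m"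
  shows "history m \<omega> = ws \<longleftrightarrow> (\<forall>j<m. I j \<omega> = rev ws ! j)"
proof -
  have "history m \<omega> = ws \<longleftrightarrow> rev (history m \<omega>) = rev ws" by simp
  also have "\<dots> \<longleftrightarrow> (\<forall>j<m. I j \<omega> = rev ws ! j)"
    using assms by (simp add: list_eq_iff_nth_eq history_nth)
  finally show ?thesis .
qed

lemma I_measurable: "I k \<in> M \<rightarrow>\<^sub>M count_space UNIV"
  using indep unfolding indep_vars_def2 by auto

lemma I_event: "{\<omega> \<in> space M. I k \<omega> = c} = I k -` {c} \<inter> space M"
  by auto

lemma prob_I: "prob {\<omega> \<in> space M. I k \<omega> = c} = 1 / real CARD('b)"
proof -
  have "emeasure M {\<omega> \<in> space M. I k \<omega> = c} = emeasure (distr M (count_space UNIV) (I k)) {c}"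
    unfolding I_event by (rule emeasure_distr[symmetric]) (auto intro: I_measurable)
  also have "\<dots> = ennreal (1 / real CARD('b))"
    by (simp add: uniform emeasure_pmf_single pmf_of_set)
  finally show ?thesis by (simp add: emeasure_eq_measure)
qed

lemma history_event:
  assumes "ws \<noteq> []"
  shows "{\<omega> \<in> space M. history (length ws) \<omega> = ws}
           = (\<Inter>j\<in>{..<length ws}. {\<omega> \<in> space M. I j \<omega> = rev ws ! j})"
  using assms by (auto simp: history_eq_iff)

lemma I_event_sets: "{\<omega> \<in> space M. I j \<omega> = c} \<in> sets M"
  unfolding I_event by (rule measurable_sets[OF I_measurable]) simp

lemma history_event_sets: "{\<omega> \<in> space M. history (length ws) \<omega> = ws} \<in> sets M"
proof (cases "ws = []")
  case False
  then have "{..<length ws} \<noteq> {}" by (simp add: lessThan_empty_iff)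
  then show ?thesis
    unfolding history_event[OF False] by (rule sets.finite_INT[OF finite_lessThan]) (simp_all add: I_event_sets)
qed (simp add: history_def)

lemma prob_history: "prob {\<omega> \<in> space M. history (length ws) \<omega> = ws} = (1 / real CARD('b)) ^ length ws"
proof (cases "ws = []")
  case False
  define A where "A j = {\<omega> \<in> space M. I j \<omega> = rev ws ! j}" for j
  have indep_sets: "indep_sets (\<lambda>i. {I i -` B \<inter> space M | B. B \<in> sets (count_space UNIV)}) UNIV"
    using indep unfolding indep_vars_def2 by blast
  have "A j \<in> {I j -` B \<inter> space M | B. B \<in> sets (count_space UNIV)}" for j
    unfolding A_def I_event by (intro CollectI exI[of _ "{rev ws ! j}"]) simp
  moreover have "{..<length ws} \<noteq> {}" using False by (simp add: lessThan_empty_iff)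
  ultimately have "prob (\<Inter>j\<in>{..<length ws}. A j) = (\<Prod>j\<in>{..<length ws}. prob (A j))"
    by (intro indep_setsD[OF indep_sets]) auto
  then show ?thesis
    unfolding history_event[OF False] A_def[symmetric] by (simp add: A_def prob_I)
qed (simp add: history_def prob_space)

lemma history_measurable: "history m \<in> M \<rightarrow>\<^sub>M count_space UNIV"
  unfolding measurable_count_space_eq2_countable
proof (intro conjI ballI)
  fix ws :: "'b list"
  show "history m -` {ws} \<inter> space M \<in> sets M"
  proof (cases "length ws = m")
    case True
    then have "history m -` {ws} \<inter> space M = {\<omega> \<in> space M. history (length ws) \<omega> = ws}"
      by auto
    then show ?thesis using history_event_sets by simp
  next
    case False
    then have "history m -` {ws} \<inter> space M = {}" by auto
    then show ?thesis by simp
  qed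
qed simp

definition words :: "nat \<Rightarrow> 'b list set" where
  "words m = {ws. length ws = m}"

lemma finite_words: "finite (words m)"
  using finite_lists_length_eq[of "UNIV :: 'b set" m] by (simp add: words_def)

lemma words_Suc: "words (Suc m) = (\<lambda>(ws, i). i # ws) ` (words m \<times> UNIV)"
  using lists_length_Suc_eq[of "UNIV :: 'b set" m] by (simp add: words_def)

lemma nn_integral_history:
  "(\<integral>\<^sup>+\<omega>. G (history m \<omega>) \<partial>M) = (\<Sum>ws\<in>words m. G ws) * ennreal ((1 / real CARD('b)) ^ m)"
proof -
  define E where "E ws = {\<omega> \<in> space M. history (length ws) \<omega> = ws}" for ws
  have "G (history m \<omega>) = (\<Sum>ws\<in>words m. G ws * indicator (E ws) \<omega>)" if "\<omega> \<in> space M" for \<omega>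
  proof -
    have "(\<Sum>ws\<in>words m. G ws * indicator (E ws) \<omega>) = (\<Sum>ws\<in>words m. if ws = history m \<omega> then G ws else 0)"
      using that by (intro sum.cong refl) (auto simp: E_def words_def)
    then show ?thesis using finite_words[of m] by (simp add: words_def)
  qed
  then have "(\<integral>\<^sup>+\<omega>. G (history m \<omega>) \<partial>M) = (\<integral>\<^sup>+\<omega>. (\<Sum>ws\<in>words m. G ws * indicator (E ws) \<omega>) \<partial>M)"
    by (intro nn_integral_cong) simp
  also have "\<dots> = (\<Sum>ws\<in>words m. \<integral>\<^sup>+\<omega>. G ws * indicator (E ws) \<omega> \<partial>M)"
    using history_event_sets by (intro nn_integral_sum) (auto simp: E_def)
  also have "\<dots> = (\<Sum>ws\<in>words m. G ws * ennreal ((1 / real CARD('b)) ^ m))"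
  proof (intro sum.cong refl)
    fix ws assume "ws \<in> words m"
    then have "length ws = m" by (simp add: words_def)
    then show "(\<integral>\<^sup>+\<omega>. G ws * indicator (E ws) \<omega> \<partial>M) = G ws * ennreal ((1 / real CARD('b)) ^ m)"
      unfolding E_def using nn_integral_cmult_indicator[OF history_event_sets, of "G ws" ws]
        prob_history[of ws]
      by (simp add: emeasure_eq_measure)
  qed
  finally show ?thesis by (simp add: sum_distrib_right)
qed

definition iterate_of :: "nat \<Rightarrow> 'b list \<Rightarrow> real^'n" where
  "iterate_of k ws = rcd_seq f g h L blk x0 (\<lambda>j. rev ws ! j) k"

lemma rcd_seq_prefix:
  "(\<And>j. j < k \<Longrightarrow> a j = b j) \<Longrightarrow> rcd_seq f g h L blk x0 a k = rcd_seq f g h L blk x0 b k"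
  by (induction k) auto

lemma iterate_history: "iterate \<omega> k = iterate_of k (history k \<omega>)"
  unfolding iterate_def iterate_of_def by (rule rcd_seq_prefix) (simp add: history_nth)

lemma measurable_of_history: "(\<lambda>\<omega>. G (history m \<omega>)) \<in> borel_measurable M"
  by (rule measurable_compose[OF history_measurable]) simp

definition taken_step_sq :: "'a \<Rightarrow> nat \<Rightarrow> real" where
  "taken_step_sq \<omega> k = L (I k \<omega>) * (norm (rcd_dir f g h L blk (iterate \<omega> k) (I k \<omega>)))\<^sup>2"

lemma taken_step_sq_nonneg: "taken_step_sq \<omega> k \<ge> 0"
  unfolding taken_step_sq_def by (intro mult_nonneg_nonneg) (auto intro: less_imp_le[OF L_pos])

text \<open>The key identity of the paper: since \<open>I k\<close> is uniform and independent of \<open>x\<^sub>k\<close>, the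
  expected size of the step taken is a \<open>1/N\<close> fraction of the expected size of all block steps,
  \<open>E[M\<^sub>1(x\<^sub>k,L)\<^sup>2] = N E[L\<^sub>i\<^sub>k \<parallel>d\<^sub>i\<^sub>k\<parallel>\<^sup>2]\<close>.\<close>

lemma expected_block_steps:
  "(\<integral>\<^sup>+\<omega>. block_steps_sq (iterate \<omega> k) \<partial>M) = ennreal (real CARD('b)) * (\<integral>\<^sup>+\<omega>. taken_step_sq \<omega> k \<partial>M)"
proof -
  define S where "S = (\<Sum>ws\<in>words k. ennreal (block_steps_sq (iterate_of k ws)))"
  define G where "G ws = ennreal (L (hd ws) * (norm (rcd_dir f g h L blk (iterate_of k (tl ws)) (hd ws)))\<^sup>2)" for ws
  have full: "(\<integral>\<^sup>+\<omega>. block_steps_sq (iterate \<omega> k) \<partial>M) = S * ennreal ((1 / real CARD('b)) ^ k)"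
    unfolding iterate_history S_def by (rule nn_integral_history)
  have "(\<integral>\<^sup>+\<omega>. taken_step_sq \<omega> k \<partial>M) = (\<integral>\<^sup>+\<omega>. G (history (Suc k) \<omega>) \<partial>M)"
    by (simp add: G_def taken_step_sq_def history_Suc iterate_history)
  also have "\<dots> = (\<Sum>ws\<in>words (Suc k). G ws) * ennreal ((1 / real CARD('b)) ^ Suc k)"
    by (rule nn_integral_history)
  also have "(\<Sum>ws\<in>words (Suc k). G ws) = (\<Sum>ws\<in>words k. \<Sum>i\<in>UNIV. G (i # ws))"
    unfolding words_Suc sum.reindex[OF inj_split_Cons]
    by (simp add: sum.cartesian_product prod.case_distrib)
  also have "\<dots> = S"
    unfolding S_def G_def block_steps_sq_def
    by (intro sum.cong refl) (simp add: sum_ennreal less_imp_le[OF L_pos])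
  finally have taken: "(\<integral>\<^sup>+\<omega>. taken_step_sq \<omega> k \<partial>M) = S * ennreal ((1 / real CARD('b)) ^ Suc k)" .
  have "ennreal (real CARD('b)) * ennreal ((1 / real CARD('b)) ^ Suc k) = ennreal ((1 / real CARD('b)) ^ k)"
    by (simp flip: ennreal_mult)
  then show ?thesis unfolding full taken by (simp add: mult_ac)
qed


lemma F_iterate_decrease:
  "f (iterate \<omega> (Suc k)) + h (iterate \<omega> (Suc k)) \<le> f (iterate \<omega> k) + h (iterate \<omega> k) - taken_step_sq \<omega> k / 4"
  using sufficient_decrease[of "iterate \<omega> k" "I k \<omega>"] by (simp add: iterate_def taken_step_sq_def)

lemma taken_steps_bounded:
  obtains C where "C \<ge> 0" "\<And>\<omega> K. (\<Sum>k<K. taken_step_sq \<omega> k) \<le> C"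
proof -
  obtain B where B: "\<And>x. B \<le> f x + h x" using F_bdd by (auto simp: bdd_below_def)
  have telescoped: "(\<Sum>k<K. taken_step_sq \<omega> k) \<le> 4 * (f x0 + h x0 - (f (iterate \<omega> K) + h (iterate \<omega> K)))"
    for \<omega> K
  proof (induction K)
    case 0 then show ?case by (simp add: iterate_def)
  next
    case (Suc K) then show ?case using F_iterate_decrease[of \<omega> K] by simp
  qed
  have "(\<Sum>k<K. taken_step_sq \<omega> k) \<le> 4 * (f x0 + h x0 - B)" for \<omega> K
    using telescoped[of \<omega> K] B[of "iterate \<omega> K"] by (smt (verit))
  moreover have "4 * (f x0 + h x0 - B) \<ge> 0" using B[of x0] by simp
  ultimately show thesis using that by blast
qed

text \<open>The size of the step taken is measurable: it is a function of the history of length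
  \<open>k + 1\<close>.\<close>

lemma taken_step_sq_measurable: "(\<lambda>\<omega>. ennreal (taken_step_sq \<omega> k)) \<in> borel_measurable M"
proof -
  have "taken_step_sq \<omega> k = L (hd (history (Suc k) \<omega>))
      * (norm (rcd_dir f g h L blk (iterate_of k (tl (history (Suc k) \<omega>))) (hd (history (Suc k) \<omega>))))\<^sup>2"
    for \<omega> by (simp add: taken_step_sq_def history_Suc iterate_history)
  then show ?thesis
    using measurable_of_history[of "\<lambda>ws. ennreal (L (hd ws)
        * (norm (rcd_dir f g h L blk (iterate_of k (tl ws)) (hd ws)))\<^sup>2)" "Suc k"]
    by simp
qed

lemma expected_taken_steps_finite: "(\<Sum>k. \<integral>\<^sup>+\<omega>. taken_step_sq \<omega> k \<partial>M) < \<infinity>"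
proof -
  obtain C where C: "C \<ge> 0" "\<And>\<omega> K. (\<Sum>k<K. taken_step_sq \<omega> k) \<le> C"
    using taken_steps_bounded by blast
  have "(\<Sum>k. ennreal (taken_step_sq \<omega> k)) \<le> ennreal C" for \<omega>
    unfolding suminf_eq_SUP
  proof (rule SUP_least)
    fix K
    show "(\<Sum>k<K. ennreal (taken_step_sq \<omega> k)) \<le> ennreal C"
      using C(2)[of \<omega> K] by (simp add: sum_ennreal taken_step_sq_nonneg ennreal_leI)
  qed
  then have "(\<integral>\<^sup>+\<omega>. (\<Sum>k. ennreal (taken_step_sq \<omega> k)) \<partial>M) \<le> (\<integral>\<^sup>+\<omega>. ennreal C \<partial>M)"
    by (intro nn_integral_mono)
  also have "\<dots> = ennreal C" by (simp add: emeasure_space_1)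
  finally show ?thesis
    by (simp add: nn_integral_suminf taken_step_sq_measurable order.strict_trans1)
qed

text \<open>Hence, by the key identity, \<open>\<Sum>\<^sub>k E[M\<^sub>1(x\<^sub>k,L)\<^sup>2] < \<infinity>\<close>, so \<open>M\<^sub>1(x\<^sub>k,L)\<^sup>2\<close> is almost surely
  summable and tends to \<open>0\<close> almost surely.\<close>

lemma AE_block_steps_to_zero: "AE \<omega> in M. (\<lambda>k. block_steps_sq (iterate \<omega> k)) \<longlonglongrightarrow> 0"
proof -
  have meas: "(\<lambda>\<omega>. ennreal (block_steps_sq (iterate \<omega> k))) \<in> borel_measurable M" for k
    unfolding iterate_history by (rule measurable_of_history)
  have "(\<integral>\<^sup>+\<omega>. (\<Sum>k. ennreal (block_steps_sq (iterate \<omega> k))) \<partial>M)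
      = ennreal (real CARD('b)) * (\<Sum>k. \<integral>\<^sup>+\<omega>. taken_step_sq \<omega> k \<partial>M)"
    by (simp add: nn_integral_suminf meas expected_block_steps ennreal_suminf_cmult)
  also have "\<dots> \<noteq> \<infinity>"
    using expected_taken_steps_finite by (simp add: ennreal_mult_eq_top_iff)
  finally have "(\<integral>\<^sup>+\<omega>. (\<Sum>k. ennreal (block_steps_sq (iterate \<omega> k))) \<partial>M) \<noteq> \<infinity>" .
  from nn_integral_PInf_AE[OF borel_measurable_suminf_order[OF meas] this]
  show ?thesis
  proof (rule eventually_mono)
    fix \<omega> assume "(\<Sum>k. ennreal (block_steps_sq (iterate \<omega> k))) \<noteq> \<infinity>"
    then have "summable (\<lambda>k. block_steps_sq (iterate \<omega> k))"
      by (intro summable_suminf_not_top block_steps_sq_nonneg) simp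
    then show "(\<lambda>k. block_steps_sq (iterate \<omega> k)) \<longlonglongrightarrow> 0" by (rule summable_LIMSEQ_zero)
  qed
qed

lemma AE_M1_to_zero: "AE \<omega> in M. (\<lambda>k. M1 f g h L blk (iterate \<omega> k)) \<longlonglongrightarrow> 0"
  using AE_block_steps_to_zero
proof (rule eventually_mono)
  fix \<omega> assume "(\<lambda>k. block_steps_sq (iterate \<omega> k)) \<longlonglongrightarrow> 0"
  from tendsto_real_sqrt[OF this]
  show "(\<lambda>k. M1 f g h L blk (iterate \<omega> k)) \<longlonglongrightarrow> 0" by (simp add: M1_blocks)
qed

text \<open>Part (i), second half: \<open>F(x\<^sub>k)\<close> is nonincreasing and bounded below on every sample path,
  so it converges everywhere, to a measurable limit.\<close>

lemma F_converges: "\<exists>Fbar \<in> borel_measurable M. AE \<omega> in M. (\<lambda>k. f (iterate \<omega> k) + h (iterate \<omega> k)) \<longlonglongrightarrow> Fbar \<omega>"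
proof -
  define Fs where "Fs k \<omega> = f (iterate \<omega> k) + h (iterate \<omega> k)" for k \<omega>
  obtain B where B: "\<And>x. B \<le> f x + h x" using F_bdd by (auto simp: bdd_below_def)
  have conv: "\<exists>l. (\<lambda>k. Fs k \<omega>) \<longlonglongrightarrow> l" for \<omega>
  proof -
    have "Fs (Suc k) \<omega> \<le> Fs k \<omega>" for k
      using F_iterate_decrease[of \<omega> k] taken_step_sq_nonneg[of \<omega> k] unfolding Fs_def by linarith
    then have "decseq (\<lambda>k. Fs k \<omega>)" by (rule decseq_SucI)
    moreover have "\<forall>k. B \<le> Fs k \<omega>" using B by (simp add: Fs_def)
    ultimately show ?thesis by (rule decseq_convergent) blast
  qed
  define Fbar where "Fbar \<omega> = lim (\<lambda>k. Fs k \<omega>)" for \<omega>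
  have lim: "(\<lambda>k. Fs k \<omega>) \<longlonglongrightarrow> Fbar \<omega>" for \<omega>
    using conv[of \<omega>] unfolding Fbar_def by (metis convergent_def convergent_LIMSEQ_iff)
  have "Fbar \<in> borel_measurable M"
  proof (rule borel_measurable_LIMSEQ_real[where u=Fs])
    show "(\<lambda>k. Fs k \<omega>) \<longlonglongrightarrow> Fbar \<omega>" for \<omega> by (rule lim)
    show "Fs k \<in> borel_measurable M" for k
      unfolding Fs_def iterate_history by (rule measurable_of_history)
  qed
  with lim show ?thesis unfolding Fs_def by blast
qed

text \<open>Part (ii): almost surely, every accumulation point of \<open>x\<^sub>k\<close> is stationary, since along a
  convergent subsequence all block steps vanish.\<close>

lemma AE_limit_points_stationary:
  "AE \<omega> in M. \<forall>xstar r. strict_mono r \<and> ((\<lambda>k. iterate \<omega> k) \<circ> r) \<longlonglongrightarrow> xstar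
      \<longrightarrow> - g xstar \<in> subdifferential h xstar"
  using AE_block_steps_to_zero
proof (rule eventually_mono, intro allI impI, elim conjE)
  fix \<omega> xstar and r :: "nat \<Rightarrow> nat"
  assume steps: "(\<lambda>k. block_steps_sq (iterate \<omega> k)) \<longlonglongrightarrow> 0"
    and r: "strict_mono r" and conv: "((\<lambda>k. iterate \<omega> k) \<circ> r) \<longlonglongrightarrow> xstar"
  have "(\<lambda>k. rcd_dir f g h L blk (iterate \<omega> (r k)) i) \<longlonglongrightarrow> 0" for i
    using LIMSEQ_subseq_LIMSEQ[OF block_steps_to_zero[OF steps] r] by (simp add: o_def)
  with conv show "- g xstar \<in> subdifferential h xstar"
    by (intro stationary_limit) (simp_all add: o_def)
qed

end

text \<open>The theorem: an instance of the locale \<open>rcd_prob\<close>.\<close>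

theorem theorem1:
  fixes f h :: "real^'n \<Rightarrow> real"
    and g :: "real^'n \<Rightarrow> real^'n"
    and hb :: "'b::finite \<Rightarrow> real^'n \<Rightarrow> real"
    and L :: "'b \<Rightarrow> real"
    and blk :: "'n \<Rightarrow> 'b"
    and M :: "'a measure"
    and I :: "nat \<Rightarrow> 'a \<Rightarrow> 'b"
    and x0 :: "real^'n"
  assumes blocks_nonempty: "surj blk"
    and grad: "\<And>x. (f has_derivative (\<lambda>v. g x \<bullet> v)) (at x)"
    and L_pos: "\<And>i. L i > 0"
    and lipschitz: "\<And>i x s. s \<in> blockvec blk i \<Longrightarrow>
          norm (restr blk i (g (x + s)) - restr blk i (g x)) \<le> L i * norm s"
    and h_sep: "\<And>x. h x = (\<Sum>i\<in>UNIV. hb i (restr blk i x))"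
    and hb_convex: "\<And>i. convex_on (blockvec blk i) (hb i)"
    and h_convex: "convex_on UNIV h"
    and h_cont: "continuous_on UNIV h"
    and F_bounded: "bdd_below (range (\<lambda>x. f x + h x))"
    and P: "prob_space M"
    and indep: "prob_space.indep_vars M (\<lambda>_. count_space UNIV) I UNIV"
    and uniform: "\<And>k. distr M (count_space UNIV) (I k) = measure_pmf (pmf_of_set UNIV)"
  shows "(AE \<omega> in M. (\<lambda>k. M1 f g h L blk (rcd_seq f g h L blk x0 (\<lambda>k. I k \<omega>) k))
              \<longlonglongrightarrow> 0)
       \<and> (\<exists>Fbar \<in> borel_measurable M.
            AE \<omega> in M. (\<lambda>k. f (rcd_seq f g h L blk x0 (\<lambda>k. I k \<omega>) k)
                           + h (rcd_seq f g h L blk x0 (\<lambda>k. I k \<omega>) k)) \<longlonglongrightarrow> Fbar \<omega>)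
       \<and> (AE \<omega> in M. \<forall>xstar r. strict_mono r \<and>
              ((\<lambda>k. rcd_seq f g h L blk x0 (\<lambda>k. I k \<omega>) k) \<circ> r) \<longlonglongrightarrow> xstar
            \<longrightarrow> (0::real^'n) \<in> {g xstar + v | v. v \<in> subdifferential h xstar})"
proof -
  interpret rcd_prob f h g hb L blk M I x0
    by (intro rcd_prob.intro rcd.intro rcd_prob_axioms.intro P grad L_pos lipschitz h_sep
        h_convex h_cont indep uniform F_bounded)
  have subgradient: "- g x \<in> subdifferential h x \<Longrightarrow> (0::real^'n) \<in> {g x + v | v. v \<in> subdifferential h x}"
    for x by force
  show ?thesis
  proof (intro conjI)
    show "AE \<omega> in M. (\<lambda>k. M1 f g h L blk (rcd_seq f g h L blk x0 (\<lambda>k. I k \<omega>) k)) \<longlonglongrightarrow> 0"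
      using AE_M1_to_zero unfolding iterate_def .
    show "\<exists>Fbar \<in> borel_measurable M. AE \<omega> in M. (\<lambda>k. f (rcd_seq f g h L blk x0 (\<lambda>k. I k \<omega>) k)
        + h (rcd_seq f g h L blk x0 (\<lambda>k. I k \<omega>) k)) \<longlonglongrightarrow> Fbar \<omega>"
      using F_converges unfolding iterate_def .
    show "AE \<omega> in M. \<forall>xstar r. strict_mono r \<and>
        ((\<lambda>k. rcd_seq f g h L blk x0 (\<lambda>k. I k \<omega>) k) \<circ> r) \<longlonglongrightarrow> xstar
        \<longrightarrow> (0::real^'n) \<in> {g xstar + v | v. v \<in> subdifferential h xstar}"
      using AE_limit_points_stationary unfolding iterate_def
    proof (rule eventually_mono, intro allI impI)
      fix \<omega> xstar and r :: "nat \<Rightarrow> nat"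
      assume "\<forall>xstar r. strict_mono r \<and> ((\<lambda>k. rcd_seq f g h L blk x0 (\<lambda>k. I k \<omega>) k) \<circ> r) \<longlonglongrightarrow> xstar
          \<longrightarrow> - g xstar \<in> subdifferential h xstar"
        and "strict_mono r \<and> ((\<lambda>k. rcd_seq f g h L blk x0 (\<lambda>k. I k \<omega>) k) \<circ> r) \<longlonglongrightarrow> xstar"
      then show "(0::real^'n) \<in> {g xstar + v | v. v \<in> subdifferential h xstar}"
        by (intro subgradient) blast
    qed
  qed
qed

end
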